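(* Let $M$ be a smooth manifold and let $\Xi$ be the set of all splittings on $M$. The group $\mathcal A$ of gauge transformations acts transitively on $\Xi$: for any two splittings $\varepsilon_0,\varepsilon_1$ on $M$ there exists $f\in\mathcal A$ with $\varepsilon_0=f\varepsilon_1$.
   Context: $M$ is a smooth manifold of dimension $n\ge2$. A splitting $\varepsilon$ on $M$ assigns to each $(p,q)\in M\times M$ a linear isomorphism $\varepsilon(p,q):T_pM\to T_qM$, smooth in $(p,q)$, with $\varepsilon(q,r)\circ\varepsilon(p,q)=\varepsilon(p,r)$ and $\varepsilon(p,p)=\mathrm{id}$. A gauge transformation is a smooth section $f$ of the bundle of invertible endomorphisms of $TM$, i.e. a smooth assignment $x\mapsto f(x)\in GL(T_xM)$; they form a group $\mathcal A$ under pointwise composition. $\mathcal A$ acts on splittings by $(f\varepsilon)(p,q)=f(q)\circ\varepsilon(p,q)\circ f(p)^{-1}$; in coordinates $(f\varepsilon)^i_j(x,y)=f^i_a(y)\varepsilon^a_b(x,y)g^b_j(x)$ where $g=f^{-1}$. *)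

theory Defs
  imports "HOL-Analysis.Analysis"
begin

text \<open>C k S f: f is k times continuously differentiable on S, expressed via
  partial derivatives D i (one for each basis vector i).  For open S this is
  the usual notion; smooth_on S f means C^infinity.\<close>

fun Ck :: "nat \<Rightarrow> 'a::euclidean_space set \<Rightarrow> ('a \<Rightarrow> 'b::real_normed_vector) \<Rightarrow> bool" where
  "Ck 0 S f = continuous_on S f"
| "Ck (Suc k) S f =
     (\<exists>D :: 'a \<Rightarrow> 'a \<Rightarrow> 'b.
        (\<forall>x\<in>S. (f has_derivative (\<lambda>h. \<Sum>i\<in>Basis. (h \<bullet> i) *\<^sub>R D i x)) (at x))
        \<and> (\<forall>i\<in>Basis. Ck k S (D i)))"

definition smooth_on :: "'a::euclidean_space set \<Rightarrow> ('a \<Rightarrow> 'b::real_normed_vector) \<Rightarrow> bool" where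
  "smooth_on S f \<longleftrightarrow> (\<forall>k. Ck k S f)"

text \<open>A chart is a pair (U, phi) with U open in M and phi a homeomorphism of U
  onto an open subset of real^'n.  The manifold M is the whole carrier type 'm
  (Hausdorff, second countable).\<close>

type_synonym ('m, 'n) chart = "'m set \<times> ('m \<Rightarrow> real ^ 'n)"

definition is_chart :: "('m::topological_space, 'n::finite) chart \<Rightarrow> bool" where
  "is_chart c \<longleftrightarrow> (case c of (U, \<phi>) \<Rightarrow>
      open U \<and> open (\<phi> ` U) \<and> (\<exists>\<psi>. homeomorphism U (\<phi> ` U) \<phi> \<psi>))"

definition transition :: "('m, 'n::finite) chart \<Rightarrow> ('m, 'n) chart \<Rightarrow> real ^ 'n \<Rightarrow> real ^ 'n" where
  "transition c d = (case c of (U, \<phi>) \<Rightarrow> case d of (V, \<psi>) \<Rightarrow> \<psi> \<circ> inv_into U \<phi>)"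

definition smooth_atlas :: "('m::topological_space, 'n::finite) chart set \<Rightarrow> bool" where
  "smooth_atlas A \<longleftrightarrow>
     (\<forall>c\<in>A. is_chart c) \<and>
     (\<Union>c\<in>A. fst c) = UNIV \<and>
     (\<forall>c\<in>A. \<forall>d\<in>A. smooth_on (snd c ` (fst c \<inter> fst d)) (transition c d))"

text \<open>Jacobian matrix of the transition map from chart c to chart d at the point
  x (given in c-coordinates).  It transforms coordinates of tangent vectors
  w.r.t. c into coordinates w.r.t. d.\<close>

definition jac :: "('m, 'n::finite) chart \<Rightarrow> ('m, 'n) chart \<Rightarrow> real ^ 'n \<Rightarrow> real ^ 'n ^ 'n" where
  "jac c d x = matrix (frechet_derivative (transition c d) (at x))"

text \<open>A splitting is given by its coordinate matrices: E c d p q is the matrix of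
  eps(p,q) : T_pM \<rightarrow> T_qM w.r.t. the coordinate bases of chart c at p and chart d
  at q (defined for p in the domain of c and q in the domain of d).  These are
  required to transform correctly under change of charts, so that they describe
  one chart-independent map eps(p,q).\<close>

definition splitting :: "('m::topological_space, 'n::finite) chart set \<Rightarrow>
    (('m, 'n) chart \<Rightarrow> ('m, 'n) chart \<Rightarrow> 'm \<Rightarrow> 'm \<Rightarrow> real ^ 'n ^ 'n) \<Rightarrow> bool" where
  "splitting A E \<longleftrightarrow>
     \<comment> \<open>chart compatibility (E describes a well-defined map T_pM \<rightarrow> T_qM)\<close>
     (\<forall>c\<in>A. \<forall>c'\<in>A. \<forall>d\<in>A. \<forall>d'\<in>A. \<forall>p\<in>fst c \<inter> fst c'. \<forall>q\<in>fst d \<inter> fst d'.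
        E c' d' p q = jac d d' (snd d q) ** E c d p q ** jac c' c (snd c' p)) \<and>
     \<comment> \<open>each eps(p,q) is a linear isomorphism\<close>
     (\<forall>c\<in>A. \<forall>d\<in>A. \<forall>p\<in>fst c. \<forall>q\<in>fst d. invertible (E c d p q)) \<and>
     \<comment> \<open>smooth in (p,q)\<close>
     (\<forall>c\<in>A. \<forall>d\<in>A. smooth_on (snd c ` fst c \<times> snd d ` fst d)
        (\<lambda>(x, y). E c d (inv_into (fst c) (snd c) x) (inv_into (fst d) (snd d) y))) \<and>
     \<comment> \<open>eps(q,r) o eps(p,q) = eps(p,r)\<close>
     (\<forall>c\<in>A. \<forall>d\<in>A. \<forall>e\<in>A. \<forall>p\<in>fst c. \<forall>q\<in>fst d. \<forall>r\<in>fst e.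
        E d e q r ** E c d p q = E c e p r) \<and>
     \<comment> \<open>eps(p,p) = id\<close>
     (\<forall>c\<in>A. \<forall>p\<in>fst c. E c c p p = mat 1)"

text \<open>A gauge transformation is a smooth section f of GL(TM), given by its
  coordinate matrices F c p (matrix of f(p) in the coordinate basis of c).\<close>

definition gauge :: "('m::topological_space, 'n::finite) chart set \<Rightarrow>
    (('m, 'n) chart \<Rightarrow> 'm \<Rightarrow> real ^ 'n ^ 'n) \<Rightarrow> bool" where
  "gauge A F \<longleftrightarrow>
     (\<forall>c\<in>A. \<forall>c'\<in>A. \<forall>p\<in>fst c \<inter> fst c'.
        F c' p = jac c c' (snd c p) ** F c p ** jac c' c (snd c' p)) \<and>
     (\<forall>c\<in>A. \<forall>p\<in>fst c. invertible (F c p)) \<and>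
     (\<forall>c\<in>A. smooth_on (snd c ` fst c) (\<lambda>x. F c (inv_into (fst c) (snd c) x)))"

definition gauge_act ::
    "(('m, 'n::finite) chart \<Rightarrow> 'm \<Rightarrow> real ^ 'n ^ 'n) \<Rightarrow>
     (('m, 'n) chart \<Rightarrow> ('m, 'n) chart \<Rightarrow> 'm \<Rightarrow> 'm \<Rightarrow> real ^ 'n ^ 'n) \<Rightarrow>
     (('m, 'n) chart \<Rightarrow> ('m, 'n) chart \<Rightarrow> 'm \<Rightarrow> 'm \<Rightarrow> real ^ 'n ^ 'n)" where
  "gauge_act F E = (\<lambda>c d p q. F d q ** E c d p q ** matrix_inv (F c p))"

definition splitting_eq :: "('m, 'n::finite) chart set \<Rightarrow>
    (('m, 'n) chart \<Rightarrow> ('m, 'n) chart \<Rightarrow> 'm \<Rightarrow> 'm \<Rightarrow> real ^ 'n ^ 'n) \<Rightarrow>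
    (('m, 'n) chart \<Rightarrow> ('m, 'n) chart \<Rightarrow> 'm \<Rightarrow> 'm \<Rightarrow> real ^ 'n ^ 'n) \<Rightarrow> bool" where
  "splitting_eq A E E' \<longleftrightarrow>
     (\<forall>c\<in>A. \<forall>d\<in>A. \<forall>p\<in>fst c. \<forall>q\<in>fst d. E c d p q = E' c d p q)"

end

theory Submission
  imports Defs
begin

text \<open>Fix a base point \<open>p\<^sub>0\<close> and put \<open>f(q) = \<epsilon>\<^sub>0(p\<^sub>0, q) \<circ> \<epsilon>\<^sub>1(q, p\<^sub>0)\<close>. The cocycle
  identities of both splittings give
  \<open>f(q) \<circ> \<epsilon>\<^sub>1(p, q) \<circ> f(p)\<^sup>-\<^sup>1 = \<epsilon>\<^sub>0(p\<^sub>0, q) \<circ> \<epsilon>\<^sub>1(q, p\<^sub>0) \<circ> \<epsilon>\<^sub>1(p, q) \<circ> \<epsilon>\<^sub>1(p\<^sub>0, p) \<circ> \<epsilon>\<^sub>0(p, p\<^sub>0) = \<epsilon>\<^sub>0(p, q)\<close>,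
  and \<open>f\<close> is smooth because a map that is smooth in \<open>(p, q)\<close> stays smooth when one
  argument is frozen.\<close>

lemma Ck_SucD: "Ck (Suc k) S f \<Longrightarrow> Ck k S f"
proof (induction k arbitrary: f)
  case 0
  then obtain D where "\<forall>x\<in>S. (f has_derivative (\<lambda>h. \<Sum>i\<in>Basis. (h \<bullet> i) *\<^sub>R D i x)) (at x)"
    by auto
  then show ?case
    by (auto intro: continuous_at_imp_continuous_on has_derivative_continuous)
next
  case (Suc k)
  then obtain D where "\<forall>x\<in>S. (f has_derivative (\<lambda>h. \<Sum>i\<in>Basis. (h \<bullet> i) *\<^sub>R D i x)) (at x)"
    and "\<forall>i\<in>Basis. Ck (Suc k) S (D i)"
    by (simp only: Ck.simps(2)[of "Suc k"]) blast
  with Suc.IH show ?case by (simp only: Ck.simps(2)[of k]) blast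
qed

lemma Ck_const: "Ck k S (\<lambda>x. c)"
proof (induction k arbitrary: c)
  case (Suc k)
  then show ?case by (simp only: Ck.simps) (intro exI[of _ "\<lambda>i x. 0"] conjI ballI; simp)
qed simp

lemma Ck_add: "Ck k S f \<Longrightarrow> Ck k S g \<Longrightarrow> Ck k S (\<lambda>x. f x + g x)"
proof (induction k arbitrary: f g)
  case (Suc k)
  then obtain Df Dg where
    f: "\<forall>x\<in>S. (f has_derivative (\<lambda>h. \<Sum>i\<in>Basis. (h \<bullet> i) *\<^sub>R Df i x)) (at x)" "\<forall>i\<in>Basis. Ck k S (Df i)"
    and g: "\<forall>x\<in>S. (g has_derivative (\<lambda>h. \<Sum>i\<in>Basis. (h \<bullet> i) *\<^sub>R Dg i x)) (at x)" "\<forall>i\<in>Basis. Ck k S (Dg i)"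
    by auto
  have "((\<lambda>x. f x + g x) has_derivative (\<lambda>h. \<Sum>i\<in>Basis. (h \<bullet> i) *\<^sub>R (Df i x + Dg i x))) (at x)"
    if "x \<in> S" for x
    using has_derivative_add[OF f(1)[rule_format, OF that] g(1)[rule_format, OF that]]
    by (simp add: scaleR_add_right sum.distrib)
  moreover have "Ck k S (\<lambda>x. Df i x + Dg i x)" if "i \<in> Basis" for i
    using Suc.IH f(2) g(2) that by blast
  ultimately show ?case
    by (simp only: Ck.simps) (intro exI[of _ "\<lambda>i x. Df i x + Dg i x"] conjI ballI)
qed (auto intro: continuous_on_add)

lemma Ck_sum:
  assumes "finite I" "\<And>i. i \<in> I \<Longrightarrow> Ck k S (f i)"
  shows "Ck k S (\<lambda>x. \<Sum>i\<in>I. f i x)"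
  using assms
proof (induction I rule: finite_induct)
  case empty
  show ?case by (simp only: sum.empty Ck_const)
next
  case (insert j I)
  then show ?case by (simp only: sum.insert[OF insert.hyps]) (intro Ck_add; blast)
qed

lemma Ck_bilinear:
  fixes prod :: "'b::real_normed_vector \<Rightarrow> 'c::real_normed_vector \<Rightarrow> 'd::real_normed_vector"
  assumes prod: "bounded_bilinear prod"
  shows "Ck k S f \<Longrightarrow> Ck k S g \<Longrightarrow> Ck k S (\<lambda>x. prod (f x) (g x))"
proof (induction k arbitrary: f g)
  case 0
  then show ?case by (simp add: bounded_bilinear.continuous_on[OF prod])
next
  case (Suc k)
  then obtain Df Dg where
    f: "\<forall>x\<in>S. (f has_derivative (\<lambda>h. \<Sum>i\<in>Basis. (h \<bullet> i) *\<^sub>R Df i x)) (at x)" "\<forall>i\<in>Basis. Ck k S (Df i)"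
    and g: "\<forall>x\<in>S. (g has_derivative (\<lambda>h. \<Sum>i\<in>Basis. (h \<bullet> i) *\<^sub>R Dg i x)) (at x)" "\<forall>i\<in>Basis. Ck k S (Dg i)"
    by auto
  have der: "((\<lambda>x. prod (f x) (g x)) has_derivative
      (\<lambda>h. \<Sum>i\<in>Basis. (h \<bullet> i) *\<^sub>R (prod (f x) (Dg i x) + prod (Df i x) (g x)))) (at x)"
    if "x \<in> S" for x
    using bounded_bilinear.FDERIV[OF prod f(1)[rule_format, OF that] g(1)[rule_format, OF that]]
    by (simp only: bounded_bilinear.sum_left[OF prod] bounded_bilinear.sum_right[OF prod]
        bounded_bilinear.scaleR_left[OF prod] bounded_bilinear.scaleR_right[OF prod]
        scaleR_add_right sum.distrib)
  have "Ck k S (\<lambda>x. prod (f x) (Dg i x) + prod (Df i x) (g x))" if "i \<in> Basis" for i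
    using Suc.IH[OF Ck_SucD[OF Suc.prems(1)]] Suc.IH[OF _ Ck_SucD[OF Suc.prems(2)]] f(2) g(2) that
    by (simp add: Ck_add)
  with der show ?case
    by (simp only: Ck.simps)
      (intro exI[of _ "\<lambda>i x. prod (f x) (Dg i x) + prod (Df i x) (g x)"] conjI ballI)
qed

lemma Ck_compose_affine:
  fixes L :: "'a::euclidean_space \<Rightarrow> 'b::euclidean_space"
  assumes L: "linear L" and maps: "(\<lambda>y. a + L y) ` T \<subseteq> S"
  shows "Ck k S f \<Longrightarrow> Ck k T (\<lambda>y. f (a + L y))"
proof (induction k arbitrary: f)
  case 0
  have "continuous_on T (\<lambda>y. a + L y)"
    using L by (intro continuous_intros linear_continuous_on) (simp add: linear_conv_bounded_linear)
  with 0 maps show ?case by (simp only: Ck.simps) (rule continuous_on_compose2)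
next
  case (Suc k)
  then obtain D where
    f: "\<forall>x\<in>S. (f has_derivative (\<lambda>h. \<Sum>i\<in>Basis. (h \<bullet> i) *\<^sub>R D i x)) (at x)" "\<forall>i\<in>Basis. Ck k S (D i)"
    by auto
  define D' where "D' j y = (\<Sum>i\<in>Basis. (L j \<bullet> i) *\<^sub>R D i (a + L y))" for j y
  have "((\<lambda>y. f (a + L y)) has_derivative (\<lambda>h. \<Sum>j\<in>Basis. (h \<bullet> j) *\<^sub>R D' j y)) (at y)"
    if "y \<in> T" for y
  proof -
    have dL: "((\<lambda>y. a + L y) has_derivative L) (at y)"
      using has_derivative_add[OF has_derivative_const bounded_linear.has_derivative[OF _ has_derivative_ident]] L
      by (simp add: linear_conv_bounded_linear)
    have "a + L y \<in> S" using maps that by blast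
    then have "((\<lambda>y. f (a + L y)) has_derivative (\<lambda>h. \<Sum>i\<in>Basis. (L h \<bullet> i) *\<^sub>R D i (a + L y))) (at y)"
      using has_derivative_compose[OF dL] f(1) by blast
    moreover have "(\<Sum>i\<in>Basis. (L h \<bullet> i) *\<^sub>R D i (a + L y)) = (\<Sum>j\<in>Basis. (h \<bullet> j) *\<^sub>R D' j y)" for h
    proof -
      have Lh: "L h \<bullet> i = (\<Sum>j\<in>Basis. (h \<bullet> j) * (L j \<bullet> i))" for i
        by (rule Linear_Algebra.linear_componentwise[OF L])
      have "(\<Sum>i\<in>Basis. (L h \<bullet> i) *\<^sub>R D i (a + L y))
          = (\<Sum>i\<in>Basis. \<Sum>j\<in>Basis. ((h \<bullet> j) * (L j \<bullet> i)) *\<^sub>R D i (a + L y))"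
        by (simp only: Lh scaleR_sum_left)
      also have "\<dots> = (\<Sum>j\<in>Basis. \<Sum>i\<in>Basis. ((h \<bullet> j) * (L j \<bullet> i)) *\<^sub>R D i (a + L y))"
        by (rule sum.swap)
      also have "\<dots> = (\<Sum>j\<in>Basis. (h \<bullet> j) *\<^sub>R D' j y)"
        by (simp only: D'_def scaleR_sum_right scaleR_scaleR)
      finally show ?thesis .
    qed
    ultimately show ?thesis by simp
  qed
  moreover have "Ck k T (D' j)" for j
    unfolding D'_def using Suc.IH f(2)
    by (intro Ck_sum Ck_bilinear[OF bounded_bilinear_scaleR, OF Ck_const]) simp_all
  ultimately show ?case
    by (simp only: Ck.simps) (intro exI[of _ D'] conjI ballI; blast)
qed

lemma smooth_on_compose_affine:
  fixes L :: "'a::euclidean_space \<Rightarrow> 'b::euclidean_space"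
  assumes "smooth_on S f" "linear L" "(\<lambda>y. a + L y) ` T \<subseteq> S"
  shows "smooth_on T (\<lambda>y. f (a + L y))"
  using assms Ck_compose_affine unfolding smooth_on_def by blast

lemma smooth_on_fix_fst:
  fixes f :: "'a::euclidean_space \<times> 'b::euclidean_space \<Rightarrow> 'c::real_normed_vector"
  assumes "smooth_on (S \<times> T) f" "x \<in> S"
  shows "smooth_on T (\<lambda>y. f (x, y))"
proof -
  have "linear (\<lambda>y. (0::'a, y))" by (rule linearI) simp_all
  with assms show ?thesis
    using smooth_on_compose_affine[OF assms(1), of "\<lambda>y. (0, y)" "(x, 0)" T] by auto
qed

lemma smooth_on_fix_snd:
  fixes f :: "'a::euclidean_space \<times> 'b::euclidean_space \<Rightarrow> 'c::real_normed_vector"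
  assumes "smooth_on (S \<times> T) f" "y \<in> T"
  shows "smooth_on S (\<lambda>x. f (x, y))"
proof -
  have "linear (\<lambda>x. (x, 0::'b))" by (rule linearI) simp_all
  with assms show ?thesis
    using smooth_on_compose_affine[OF assms(1), of "\<lambda>x. (x, 0)" "(0, y)" S] by auto
qed

lemma smooth_on_bilinear:
  fixes prod :: "'b::real_normed_vector \<Rightarrow> 'c::real_normed_vector \<Rightarrow> 'd::real_normed_vector"
  assumes "bounded_bilinear prod" "smooth_on S f" "smooth_on S g"
  shows "smooth_on S (\<lambda>x. prod (f x) (g x))"
  using assms Ck_bilinear unfolding smooth_on_def by blast

lemma bounded_bilinear_matrix_matrix_mult:
  "bounded_bilinear ((**) :: real^'n^'m \<Rightarrow> real^'p^'n \<Rightarrow> real^'p^'m)"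
proof -
  have "(B + C) ** A = B ** A + C ** A" for A :: "real^'p^'n" and B C :: "real^'n^'m"
    by (vector matrix_matrix_mult_def sum.distrib[symmetric] field_simps)
  then have "bilinear ((**) :: real^'n^'m \<Rightarrow> real^'p^'n \<Rightarrow> real^'p^'m)"
    unfolding bilinear_def
    by (auto intro!: linearI simp: matrix_add_ldistrib matrix_scalar_ac scalar_matrix_assoc)
  then show ?thesis by (simp add: bilinear_conv_bounded_bilinear)
qed

lemma matrix_inv_eqI:
  fixes A B :: "real^'n^'n"
  assumes "A ** B = mat 1"
  shows "matrix_inv A = B"
proof -
  have "B ** A = mat 1" using assms matrix_left_right_inverse by blast
  with assms have inv: "A ** matrix_inv A = mat 1 \<and> matrix_inv A ** A = mat 1"
    unfolding matrix_inv_def by (rule someI[of _ B, OF conjI])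
  then have "matrix_inv A = matrix_inv A ** (A ** B)" using assms by simp
  also have "\<dots> = B" using inv by (simp add: matrix_mul_assoc)
  finally show ?thesis .
qed

lemma chart_inv_into:
  assumes "is_chart c" "p \<in> fst c"
  shows "inv_into (fst c) (snd c) (snd c p) = p"
proof -
  obtain U \<phi> \<psi> where "c = (U, \<phi>)" "homeomorphism U (\<phi> ` U) \<phi> \<psi>"
    using assms(1) unfolding is_chart_def by (auto split: prod.splits)
  then show ?thesis
    using assms(2) by (metis fst_conv homeomorphism_apply1 inj_on_inverseI inv_into_f_f snd_conv)
qed

lemma splitting_chart_change:
  assumes "splitting A E" "c \<in> A" "c' \<in> A" "d \<in> A" "d' \<in> A"
    "p \<in> fst c" "p \<in> fst c'" "q \<in> fst d" "q \<in> fst d'"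
  shows "E c' d' p q = jac d d' (snd d q) ** E c d p q ** jac c' c (snd c' p)"
  using assms unfolding splitting_def by blast

lemma splitting_invertible:
  assumes "splitting A E" "c \<in> A" "d \<in> A" "p \<in> fst c" "q \<in> fst d"
  shows "invertible (E c d p q)"
  using assms unfolding splitting_def by blast

lemma splitting_smooth:
  assumes "splitting A E" "c \<in> A" "d \<in> A"
  shows "smooth_on (snd c ` fst c \<times> snd d ` fst d)
    (\<lambda>(x, y). E c d (inv_into (fst c) (snd c) x) (inv_into (fst d) (snd d) y))"
  using assms unfolding splitting_def by blast

lemma splitting_comp:
  assumes "splitting A E" "c \<in> A" "d \<in> A" "e \<in> A" "p \<in> fst c" "q \<in> fst d" "r \<in> fst e"
  shows "E d e q r ** E c d p q = E c e p r"
  using assms unfolding splitting_def by blast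

lemma splitting_refl:
  assumes "splitting A E" "c \<in> A" "p \<in> fst c"
  shows "E c c p p = mat 1"
  using assms unfolding splitting_def by blast

lemma splitting_inverse:
  assumes "splitting A E" "c \<in> A" "d \<in> A" "p \<in> fst c" "q \<in> fst d"
  shows "E d c q p ** E c d p q = mat 1"
  using assms splitting_comp[OF assms(1-3,2,4,5,4)] splitting_refl[OF assms(1,2,4)] by simp

lemma splitting_jac_self_involution:
  assumes "splitting A E" "c \<in> A" "p \<in> fst c"
  shows "jac c c (snd c p) ** jac c c (snd c p) = mat 1"
  using splitting_chart_change[OF assms(1,2,2,2,2,3,3,3,3)] splitting_refl[OF assms] by simp

definition based_gauge ::
    "(('m, 'n::finite) chart \<Rightarrow> ('m, 'n) chart \<Rightarrow> 'm \<Rightarrow> 'm \<Rightarrow> real ^ 'n ^ 'n) \<Rightarrow>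
     (('m, 'n) chart \<Rightarrow> ('m, 'n) chart \<Rightarrow> 'm \<Rightarrow> 'm \<Rightarrow> real ^ 'n ^ 'n) \<Rightarrow>
     ('m, 'n) chart \<Rightarrow> 'm \<Rightarrow> (('m, 'n) chart \<Rightarrow> 'm \<Rightarrow> real ^ 'n ^ 'n)" where
  "based_gauge E0 E1 c0 p0 = (\<lambda>d q. E0 c0 d p0 q ** E1 d c0 q p0)"

lemma gauge_based_gauge:
  assumes A: "smooth_atlas A" and E0: "splitting A E0" and E1: "splitting A E1"
    and c0: "c0 \<in> A" "p0 \<in> fst c0"
  shows "gauge A (based_gauge E0 E1 c0 p0)"
proof -
  let ?F = "based_gauge E0 E1 c0 p0" and ?K = "jac c0 c0 (snd c0 p0)"
  have "?F c' p = jac c c' (snd c p) ** ?F c p ** jac c' c (snd c' p)"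
    if c: "c \<in> A" "c' \<in> A" "p \<in> fst c" "p \<in> fst c'" for c c' p
  proof -
    have "?F c' p = jac c c' (snd c p) ** E0 c0 c p0 p ** (?K ** ?K) ** E1 c c0 p p0 ** jac c' c (snd c' p)"
      unfolding based_gauge_def
      splitting_chart_change[OF E0 c0(1) c0(1) c(1,2) c0(2) c0(2) c(3,4)]
      splitting_chart_change[OF E1 c(1,2) c0(1) c0(1) c(3,4) c0(2) c0(2)]
      by (simp add: matrix_mul_assoc)
    then show ?thesis
      unfolding splitting_jac_self_involution[OF E0 c0] based_gauge_def by (simp add: matrix_mul_assoc)
  qed
  moreover have "invertible (?F c p)" if "c \<in> A" "p \<in> fst c" for c p
    unfolding based_gauge_def using that c0 E0 E1
    by (intro invertible_mult splitting_invertible)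
  moreover have "smooth_on (snd c ` fst c) (\<lambda>x. ?F c (inv_into (fst c) (snd c) x))" if c: "c \<in> A" for c
  proof -
    have "is_chart c0" using A c0(1) unfolding smooth_atlas_def by blast
    then have p0: "inv_into (fst c0) (snd c0) (snd c0 p0) = p0"
      using chart_inv_into c0(2) by blast
    have x0: "snd c0 p0 \<in> snd c0 ` fst c0" using c0(2) by blast
    show ?thesis
      unfolding based_gauge_def
      using smooth_on_bilinear[OF bounded_bilinear_matrix_matrix_mult
          smooth_on_fix_fst[OF splitting_smooth[OF E0 c0(1) c] x0]
          smooth_on_fix_snd[OF splitting_smooth[OF E1 c c0(1)] x0]]
      by (simp add: p0)
  qed
  ultimately show ?thesis unfolding gauge_def by blast
qed

lemma matrix_inv_based_gauge:
  assumes E0: "splitting A E0" and E1: "splitting A E1"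
    and c0: "c0 \<in> A" "p0 \<in> fst c0" and d: "d \<in> A" "q \<in> fst d"
  shows "matrix_inv (based_gauge E0 E1 c0 p0 d q) = E1 c0 d p0 q ** E0 d c0 q p0"
proof (rule matrix_inv_eqI)
  have "based_gauge E0 E1 c0 p0 d q ** (E1 c0 d p0 q ** E0 d c0 q p0)
      = E0 c0 d p0 q ** (E1 d c0 q p0 ** E1 c0 d p0 q) ** E0 d c0 q p0"
    unfolding based_gauge_def by (simp add: matrix_mul_assoc)
  also have "\<dots> = mat 1"
    using splitting_inverse[OF E1 c0(1) d(1) c0(2) d(2)] splitting_inverse[OF E0 d(1) c0(1) d(2) c0(2)]
    by (simp add: matrix_mul_assoc)
  finally show "based_gauge E0 E1 c0 p0 d q ** (E1 c0 d p0 q ** E0 d c0 q p0) = mat 1" .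
qed

lemma gauge_act_based_gauge:
  assumes E0: "splitting A E0" and E1: "splitting A E1" and c0: "c0 \<in> A" "p0 \<in> fst c0"
  shows "splitting_eq A E0 (gauge_act (based_gauge E0 E1 c0 p0) E1)"
  unfolding splitting_eq_def
proof (intro ballI)
  fix c d p q assume c: "c \<in> A" "d \<in> A" "p \<in> fst c" "q \<in> fst d"
  have "gauge_act (based_gauge E0 E1 c0 p0) E1 c d p q
      = E0 c0 d p0 q ** (E1 d c0 q p0 ** E1 c d p q ** E1 c0 c p0 p) ** E0 c c0 p p0"
    unfolding gauge_act_def matrix_inv_based_gauge[OF E0 E1 c0 c(1,3)]
    by (simp add: based_gauge_def matrix_mul_assoc)
  also have "\<dots> = E0 c0 d p0 q ** E0 c c0 p p0"
    using splitting_comp[OF E1 c(1,2) c0(1) c(3,4) c0(2)] splitting_comp[OF E1 c0(1) c(1) c0(1) c0(2) c(3) c0(2)]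
      splitting_refl[OF E1 c0] by (simp add: matrix_mul_assoc)
  also have "\<dots> = E0 c d p q"
    using splitting_comp[OF E0 c(1) c0(1) c(2) c(3) c0(2) c(4)] .
  finally show "E0 c d p q = gauge_act (based_gauge E0 E1 c0 p0) E1 c d p q" by simp
qed

theorem lemma11:
  fixes A :: "('m::{t2_space, second_countable_topology}, 'n::finite) chart set"
  assumes "CARD('n) \<ge> 2"
    and "smooth_atlas A"
    and "splitting A E0"
    and "splitting A E1"
  shows "\<exists>F. gauge A F \<and> splitting_eq A E0 (gauge_act F E1)"
proof -
  fix p0 :: 'm
  have "(\<Union>c\<in>A. fst c) = UNIV" using assms(2) unfolding smooth_atlas_def by blast
  then obtain c0 where c0: "c0 \<in> A" "p0 \<in> fst c0" by blast
  show ?thesis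
    using gauge_based_gauge[OF assms(2-4) c0] gauge_act_based_gauge[OF assms(3,4) c0] by blast
qed

end
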